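(* Let $\mathcal{S}$ be either of the calculi $\mathcal{M}'_{2018}$ or $\mathcal{M}'^{-}_{2018}$ defined below. Let $\xi,\zeta$ be stoups, $\Pi,\Gamma_1,\Gamma_2$ finite sequences of tree terms, $A,C$ formulae and $\Xi(\cdot)$ a meta-formula context (all in the language of $\mathcal{S}$). If the sequents $\xi;\Pi\to A$ and $\Xi(\zeta;\Gamma_1,A,\Gamma_2)\to C$ are derivable in $\mathcal{S}$, then the sequent $\Xi(\xi,\zeta;\Gamma_1,\Pi,\Gamma_2)\to C$ is also derivable in $\mathcal{S}$.
   Context: Formulae are built from a countable set of variables and the constant $\mathbf{1}$ by the binary connectives $\backslash$, $/$, $\cdot$, $\wedge$, $\vee$ and the unary connectives $\langle\rangle$, $[]^{-1}$ (bracket modalities) and $!$ (subexponential). A stoup is a finite multiset of formulae ($\varnothing$ is the empty stoup). A tree term is either a formula or an expression $[\Xi]$ with $\Xi$ a meta-formula; a meta-formula is an expression $\zeta;\Gamma$ where $\zeta$ is a stoup and $\Gamma$ is a finite linearly ordered sequence of tree terms (the empty sequence is written $\Lambda$); $\varnothing;\Gamma$ is written simply $\Gamma$. Comma denotes both concatenation of sequences and multiset union of stoups; $\zeta,A$ is $\zeta$ with one more copy of $A$. A sequent is $\Xi\to C$ with $\Xi$ a meta-formula and $C$ a formula. $\Xi(\Theta)$ denotes a meta-formula with a designated occurrence of a meta-formula $\Theta$, which is either $\Xi$ itself or the content of some bracket $[\Theta]$ occurring at any depth in $\Xi$; $\Xi(\Theta')$ is the result of replacing that occurrence by $\Theta'$.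 Below $A,B,C,D,A_1,A_2$ are formulae, $\Gamma,\Delta,\Delta_i,\Gamma_i$ sequences of tree terms, $\zeta,\zeta',\zeta_i$ stoups, $\Xi$ a meta-formula. Common axioms and rules: axioms $A\to A$ and $\Lambda\to\mathbf 1$; ($/L$) from $\zeta_1;\Gamma\to B$ and $\Xi(\zeta_2;\Delta_1,C,\Delta_2)\to D$ infer $\Xi(\zeta_1,\zeta_2;\Delta_1,C/B,\Gamma,\Delta_2)\to D$; ($/R$) from $\zeta;\Gamma,B\to C$ infer $\zeta;\Gamma\to C/B$; ($\backslash L$) from $\zeta_1;\Gamma\to A$ and $\Xi(\zeta_2;\Delta_1,C,\Delta_2)\to D$ infer $\Xi(\zeta_1,\zeta_2;\Delta_1,\Gamma,A\backslash C,\Delta_2)\to D$; ($\backslash R$) from $\zeta;A,\Gamma\to C$ infer $\zeta;\Gamma\to A\backslash C$; ($\cdot L$) from $\Xi(\zeta;\Delta_1,A,B,\Delta_2)\to D$ infer $\Xi(\zeta;\Delta_1,A\cdot B,\Delta_2)\to D$; ($\cdot R$) from $\zeta_1;\Delta\to A$ and $\zeta_2;\Gamma\to B$ infer $\zeta_1,\zeta_2;\Delta,\Gamma\to A\cdot B$; ($\mathbf1 L$) from $\Xi(\zeta;\Delta_1,\Delta_2)\to A$ infer $\Xi(\zeta;\Delta_1,\mathbf1,\Delta_2)\to A$; ($\vee L$) from $\Xi(\zeta;\Delta_1,A_1,\Delta_2)\to C$ and $\Xi(\zeta;\Delta_1,A_2,\Delta_2)\to C$ infer $\Xi(\zeta;\Delta_1,A_1\vee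 A_2,\Delta_2)\to C$; ($\vee R_i$, $i=1,2$) from $\Xi\to A_i$ infer $\Xi\to A_1\vee A_2$; ($\wedge L_i$) from $\Xi(\zeta;\Delta_1,A_i,\Delta_2)\to C$ infer $\Xi(\zeta;\Delta_1,A_1\wedge A_2,\Delta_2)\to C$; ($\wedge R$) from $\Xi\to A_1$ and $\Xi\to A_2$ infer $\Xi\to A_1\wedge A_2$; ($[]^{-1}L$) from $\Xi(\zeta;\Delta_1,A,\Delta_2)\to B$ infer $\Xi(\zeta;\Delta_1,[[]^{-1}A],\Delta_2)\to B$; ($[]^{-1}R$) from $[\Xi]\to A$ infer $\Xi\to []^{-1}A$; ($\langle\rangle L$) from $\Xi(\zeta;\Delta_1,[A],\Delta_2)\to B$ infer $\Xi(\zeta;\Delta_1,\langle\rangle A,\Delta_2)\to B$; ($\langle\rangle R$) from $\Xi\to A$ infer $[\Xi]\to\langle\rangle A$; ($!L$) from $\Xi(\zeta,A;\Gamma_1,\Gamma_2)\to B$ infer $\Xi(\zeta;\Gamma_1,!A,\Gamma_2)\to B$; ($!P$) from $\Xi(\zeta;\Gamma_1,A,\Gamma_2)\to B$ infer $\Xi(\zeta,A;\Gamma_1,\Gamma_2)\to B$. The calculus $\mathcal{M}'_{2018}$ consists of the common axioms and rules together with ($!R'$) from $A;\Lambda\to B$ infer $A;\Lambda\to !B$ (the stoup consists of exactly one formula) and ($!C'$) from $\Xi(\zeta,A;\Gamma_1,[\zeta',A;\Gamma_2],\Gamma_3)\to B$ infer $\Xi(\zeta,A;\Gamma_1,[[\zeta';\Gamma_2]],\Gamma_3)\to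 B$. The calculus $\mathcal{M}'^{-}_{2018}$ (with Lambek's non-emptiness restriction) is $\mathcal{M}'_{2018}$ restricted to formulae not containing $\mathbf1$, without the axiom $\Lambda\to\mathbf1$ and the rule $\mathbf1L$, and with the side conditions: $\backslash R$ and $/R$ may be applied only if $\Gamma\neq\Lambda$ or $\zeta\neq\varnothing$; $!C'$ may be applied only if $\Gamma_2\neq\Lambda$ or $\zeta'\neq\varnothing$. Cut is not a rule of these calculi; "derivable" means derivable by the listed axioms and rules. *)

theory Defs
  imports Main "HOL-Library.Multiset"
begin

text \<open>Formulae. Under A C is A\backslash C; Over C B is C/B; Diam is the bracket
  modality angle-brackets; Box is the inverse bracket modality; Bang is the subexponential.\<close>
datatype frm =
    Var nat
  | One
  | Under frm frm
  | Over frm frm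
  | Prod frm frm
  | Meet frm frm
  | Join frm frm
  | Diam frm
  | Box frm
  | Bang frm

text \<open>Tree terms and meta-formulae (stoup = multiset of formulae, then a sequence of tree terms).\<close>
datatype tree = Frm frm | Br meta
     and meta = Meta "frm multiset" "tree list"

text \<open>Contexts Xi(.): the hole is either the whole meta-formula or the content of a
  bracket at any depth.\<close>
datatype ctx = Hole | CtxIn "frm multiset" "tree list" ctx "tree list"

fun fill :: "ctx \<Rightarrow> meta \<Rightarrow> meta" where
  "fill Hole T = T"
| "fill (CtxIn z G1 c G2) T = Meta z (G1 @ [Br (fill c T)] @ G2)"

fun one_free :: "frm \<Rightarrow> bool" where
  "one_free (Var n) = True"
| "one_free One = False"
| "one_free (Under a b) = (one_free a \<and> one_free b)"
| "one_free (Over a b) = (one_free a \<and> one_free b)"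
| "one_free (Prod a b) = (one_free a \<and> one_free b)"
| "one_free (Meet a b) = (one_free a \<and> one_free b)"
| "one_free (Join a b) = (one_free a \<and> one_free b)"
| "one_free (Diam a) = one_free a"
| "one_free (Box a) = one_free a"
| "one_free (Bang a) = one_free a"

fun one_free_tree :: "tree \<Rightarrow> bool" and one_free_meta :: "meta \<Rightarrow> bool" where
  "one_free_tree (Frm a) = one_free a"
| "one_free_tree (Br m) = one_free_meta m"
| "one_free_meta (Meta z ts) = ((\<forall>a\<in>set_mset z. one_free a) \<and> (\<forall>t\<in>set ts. one_free_tree t))"

text \<open>Side condition: in the restricted calculus (neg = True) every sequent must be 1-free.\<close>
definition ok :: "bool \<Rightarrow> meta \<Rightarrow> frm \<Rightarrow> bool" where
  "ok neg X C = (neg \<longrightarrow> one_free_meta X \<and> one_free C)"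

text \<open>Derivability: neg = False gives M'_2018, neg = True gives M'^-_2018.\<close>
inductive der :: "bool \<Rightarrow> meta \<Rightarrow> frm \<Rightarrow> bool" for neg :: bool where
  ax: "ok neg (Meta {#} [Frm A]) A \<Longrightarrow> der neg (Meta {#} [Frm A]) A"
| oneR: "\<not> neg \<Longrightarrow> der neg (Meta {#} []) One"
| overL: "der neg (Meta z1 G) B \<Longrightarrow> der neg (fill X (Meta z2 (D1 @ [Frm C] @ D2))) D
    \<Longrightarrow> ok neg (fill X (Meta (z1 + z2) (D1 @ [Frm (Over C B)] @ G @ D2))) D
    \<Longrightarrow> der neg (fill X (Meta (z1 + z2) (D1 @ [Frm (Over C B)] @ G @ D2))) D"
| overR: "der neg (Meta z (G @ [Frm B])) C \<Longrightarrow> (neg \<longrightarrow> G \<noteq> [] \<or> z \<noteq> {#})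
    \<Longrightarrow> ok neg (Meta z G) (Over C B) \<Longrightarrow> der neg (Meta z G) (Over C B)"
| underL: "der neg (Meta z1 G) A \<Longrightarrow> der neg (fill X (Meta z2 (D1 @ [Frm C] @ D2))) D
    \<Longrightarrow> ok neg (fill X (Meta (z1 + z2) (D1 @ G @ [Frm (Under A C)] @ D2))) D
    \<Longrightarrow> der neg (fill X (Meta (z1 + z2) (D1 @ G @ [Frm (Under A C)] @ D2))) D"
| underR: "der neg (Meta z (Frm A # G)) C \<Longrightarrow> (neg \<longrightarrow> G \<noteq> [] \<or> z \<noteq> {#})
    \<Longrightarrow> ok neg (Meta z G) (Under A C) \<Longrightarrow> der neg (Meta z G) (Under A C)"
| prodL: "der neg (fill X (Meta z (D1 @ [Frm A, Frm B] @ D2))) D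
    \<Longrightarrow> ok neg (fill X (Meta z (D1 @ [Frm (Prod A B)] @ D2))) D
    \<Longrightarrow> der neg (fill X (Meta z (D1 @ [Frm (Prod A B)] @ D2))) D"
| prodR: "der neg (Meta z1 D) A \<Longrightarrow> der neg (Meta z2 G) B
    \<Longrightarrow> ok neg (Meta (z1 + z2) (D @ G)) (Prod A B)
    \<Longrightarrow> der neg (Meta (z1 + z2) (D @ G)) (Prod A B)"
| oneL: "\<not> neg \<Longrightarrow> der neg (fill X (Meta z (D1 @ D2))) A
    \<Longrightarrow> der neg (fill X (Meta z (D1 @ [Frm One] @ D2))) A"
| joinL: "der neg (fill X (Meta z (D1 @ [Frm A1] @ D2))) C
    \<Longrightarrow> der neg (fill X (Meta z (D1 @ [Frm A2] @ D2))) C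
    \<Longrightarrow> ok neg (fill X (Meta z (D1 @ [Frm (Join A1 A2)] @ D2))) C
    \<Longrightarrow> der neg (fill X (Meta z (D1 @ [Frm (Join A1 A2)] @ D2))) C"
| joinR1: "der neg Y A1 \<Longrightarrow> ok neg Y (Join A1 A2) \<Longrightarrow> der neg Y (Join A1 A2)"
| joinR2: "der neg Y A2 \<Longrightarrow> ok neg Y (Join A1 A2) \<Longrightarrow> der neg Y (Join A1 A2)"
| meetL1: "der neg (fill X (Meta z (D1 @ [Frm A1] @ D2))) C
    \<Longrightarrow> ok neg (fill X (Meta z (D1 @ [Frm (Meet A1 A2)] @ D2))) C
    \<Longrightarrow> der neg (fill X (Meta z (D1 @ [Frm (Meet A1 A2)] @ D2))) C"
| meetL2: "der neg (fill X (Meta z (D1 @ [Frm A2] @ D2))) C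
    \<Longrightarrow> ok neg (fill X (Meta z (D1 @ [Frm (Meet A1 A2)] @ D2))) C
    \<Longrightarrow> der neg (fill X (Meta z (D1 @ [Frm (Meet A1 A2)] @ D2))) C"
| meetR: "der neg Y A1 \<Longrightarrow> der neg Y A2 \<Longrightarrow> ok neg Y (Meet A1 A2)
    \<Longrightarrow> der neg Y (Meet A1 A2)"
| boxL: "der neg (fill X (Meta z (D1 @ [Frm A] @ D2))) B
    \<Longrightarrow> ok neg (fill X (Meta z (D1 @ [Br (Meta {#} [Frm (Box A)])] @ D2))) B
    \<Longrightarrow> der neg (fill X (Meta z (D1 @ [Br (Meta {#} [Frm (Box A)])] @ D2))) B"
| boxR: "der neg (Meta {#} [Br Y]) A \<Longrightarrow> ok neg Y (Box A) \<Longrightarrow> der neg Y (Box A)"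
| diamL: "der neg (fill X (Meta z (D1 @ [Br (Meta {#} [Frm A])] @ D2))) B
    \<Longrightarrow> ok neg (fill X (Meta z (D1 @ [Frm (Diam A)] @ D2))) B
    \<Longrightarrow> der neg (fill X (Meta z (D1 @ [Frm (Diam A)] @ D2))) B"
| diamR: "der neg Y A \<Longrightarrow> ok neg (Meta {#} [Br Y]) (Diam A)
    \<Longrightarrow> der neg (Meta {#} [Br Y]) (Diam A)"
| bangL: "der neg (fill X (Meta (add_mset A z) (G1 @ G2))) B
    \<Longrightarrow> ok neg (fill X (Meta z (G1 @ [Frm (Bang A)] @ G2))) B
    \<Longrightarrow> der neg (fill X (Meta z (G1 @ [Frm (Bang A)] @ G2))) B"
| bangP: "der neg (fill X (Meta z (G1 @ [Frm A] @ G2))) B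
    \<Longrightarrow> ok neg (fill X (Meta (add_mset A z) (G1 @ G2))) B
    \<Longrightarrow> der neg (fill X (Meta (add_mset A z) (G1 @ G2))) B"
| bangR: "der neg (Meta {#A#} []) B \<Longrightarrow> ok neg (Meta {#A#} []) (Bang B)
    \<Longrightarrow> der neg (Meta {#A#} []) (Bang B)"
| bangC: "der neg (fill X (Meta (add_mset A z) (G1 @ [Br (Meta (add_mset A z') G2)] @ G3))) B
    \<Longrightarrow> (neg \<longrightarrow> G2 \<noteq> [] \<or> z' \<noteq> {#})
    \<Longrightarrow> ok neg (fill X (Meta (add_mset A z) (G1 @ [Br (Meta {#} [Br (Meta z' G2)])] @ G3))) B
    \<Longrightarrow> der neg (fill X (Meta (add_mset A z) (G1 @ [Br (Meta {#} [Br (Meta z' G2)])] @ G3))) B"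

end

theory Submission
  imports Defs
begin

text \<open>Cut is admissible by induction on the cut formula A. If the derivation of \<open>\<xi>; \<Pi> \<rightarrow> A\<close>
  ends with a left rule, the cut moves into its premises. If it ends with a right rule, the cut
  moves up the derivation of the other premise until the occurrence of A is principal there, and
  the principal case for the main connective of A reduces it to cuts on immediate subformulae.
  To make the commutations uniform, every antecedent is written as \<open>plug E m\<close>: the left rules,
  !P and !C rewrite the meta-formula m inside an arbitrary context E, and an occurrence of A
  either lies inside m or apart from it. The principal case for !B, against a derivation of
  \<open>A; \<Lambda> \<rightarrow> B\<close>, is not a single cut: !C may have duplicated B in stoups, so all those copies
  are replaced by A at once, and each copy that !P moves into the sequence is cut against the
  derivation of \<open>A; \<Lambda> \<rightarrow> B\<close>.\<close>

section \<open>Lists and multisets\<close>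

lemma append_eq_append_single_cases:
  assumes "ys @ zs = us @ [b] @ vs"
  obtains (left) Q where "ys = us @ [b] @ Q" "vs = Q @ zs"
  | (right) M where "zs = M @ [b] @ vs" "us = ys @ M"
  using assms by (auto simp: append_eq_append_conv2 Cons_eq_append_conv append_eq_Cons_conv)

lemma append3_eq_append_single_cases:
  assumes "xs @ ys @ zs = us @ [b] @ vs"
  obtains (left) M where "xs = us @ [b] @ M" "vs = M @ ys @ zs"
  | (middle) P Q where "ys = P @ [b] @ Q" "us = xs @ P" "vs = Q @ zs"
  | (right) M where "zs = M @ [b] @ vs" "us = xs @ ys @ M"
  using assms
proof (cases rule: append_eq_append_single_cases)
  case (left Q)
  then show thesis by (rule that(1))
next
  case (right M)
  from right(1) show thesis
  proof (cases rule: append_eq_append_single_cases)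
    case (left Q)
    then show thesis using that(2) right by simp
  next
    case (right N)
    then show thesis using that(3) \<open>us = xs @ M\<close> by simp
  qed
qed

lemma list_all2_pred:
  "list_all2 R xs ys \<Longrightarrow> (\<And>x y. R x y \<Longrightarrow> P x \<Longrightarrow> P y) \<Longrightarrow> \<forall>x\<in>set xs. P x
    \<Longrightarrow> \<forall>y\<in>set ys. P y"
  by (induction rule: list_all2_induct) auto

lemma rel_mset_union: "rel_mset R M M' \<Longrightarrow> rel_mset R N N' \<Longrightarrow> rel_mset R (M + N) (M' + N')"
  by (induction rule: rel_mset_induct) (auto intro: rel_mset_Plus)

lemma rel_mset_union_leftE:
  assumes "rel_mset R (M + N) P"
  obtains P1 P2 where "P = P1 + P2" "rel_mset R M P1" "rel_mset R N P2"
  using assms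
proof (induction M arbitrary: P thesis)
  case empty
  then show ?case by (metis add_0 rel_mset_Zero)
next
  case (add a M)
  then obtain b P' where "P = add_mset b P'" "R a b" "rel_mset R (M + N) P'"
    using msed_rel_invL[of R a "M + N" P] by auto
  with add.IH show ?case
    by (metis add.prems(1) rel_mset_Plus union_mset_add_mset_left)
qed

lemma rel_mset_single_iff: "rel_mset R {#a#} P \<longleftrightarrow> (\<exists>b. P = {#b#} \<and> R a b)"
  using msed_rel_invL[of R a "{#}" P] by (auto intro: rel_mset_Plus[OF _ rel_mset_Zero])

lemma rel_mset_pred:
  "rel_mset R M N \<Longrightarrow> (\<And>x y. R x y \<Longrightarrow> P x \<Longrightarrow> P y) \<Longrightarrow> \<forall>x\<in>#M. P x
    \<Longrightarrow> \<forall>y\<in>#N. P y"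
  by (induction rule: rel_mset_induct) auto

section \<open>Contexts for meta-formulae\<close>

fun stoup :: "meta \<Rightarrow> frm multiset" where
  "stoup (Meta z ts) = z"

fun terms :: "meta \<Rightarrow> tree list" where
  "terms (Meta z ts) = ts"

lemma Meta_stoup_terms [simp]: "Meta (stoup m) (terms m) = m"
  by (cases m) simp

abbreviation sing :: "frm \<Rightarrow> meta" where
  "sing A \<equiv> Meta {#} [Frm A]"

text \<open>Plugging m into \<open>Splice z L R\<close> merges the
  stoup of m into z and splices its sequence between L and R, so that the premises and
  conclusions of all rules of the calculus are of the form \<open>plug E m\<close>.\<close>

datatype mctx =
    Splice "frm multiset" "tree list" "tree list"
  | Nest "frm multiset" "tree list" mctx "tree list"

fun plug :: "mctx \<Rightarrow> meta \<Rightarrow> meta" where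
  "plug (Splice z L R) m = Meta (z + stoup m) (L @ terms m @ R)"
| "plug (Nest z L c R) m = Meta z (L @ [Br (plug c m)] @ R)"

fun mctx_comp :: "mctx \<Rightarrow> mctx \<Rightarrow> mctx" where
  "mctx_comp (Splice z L R) (Splice z' L' R') = Splice (z + z') (L @ L') (R' @ R)"
| "mctx_comp (Splice z L R) (Nest z' L' c R') = Nest (z + z') (L @ L') c (R' @ R)"
| "mctx_comp (Nest z L c R) K = Nest z L (mctx_comp c K) R"

lemma plug_mctx_comp [simp]: "plug (mctx_comp E K) m = plug E (plug K m)"
  by (induction E K rule: mctx_comp.induct) (auto simp: ac_simps)

fun mctx_of :: "ctx \<Rightarrow> frm multiset \<Rightarrow> tree list \<Rightarrow> tree list \<Rightarrow> mctx" where
  "mctx_of Hole z L R = Splice z L R"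
| "mctx_of (CtxIn w L' c R') z L R = Nest w L' (mctx_of c z L R) R'"

lemma plug_mctx_of: "plug (mctx_of X z L R) m = fill X (Meta (z + stoup m) (L @ terms m @ R))"
  by (induction X) auto

lemma mctx_of_cases: obtains X z L R where "E = mctx_of X z L R"
proof (induction E arbitrary: thesis)
  case (Splice z L R)
  then show ?case by (metis mctx_of.simps(1))
next
  case (Nest z L c R)
  then show ?case by (metis mctx_of.simps(2))
qed

lemma plug_eq_fill:
  obtains X z L R where "\<And>m. plug E m = fill X (Meta (z + stoup m) (L @ terms m @ R))"
  by (metis mctx_of_cases plug_mctx_of)

lemma plug_nonempty: "n \<noteq> Meta {#} [] \<Longrightarrow> plug K n \<noteq> Meta {#} []"
  by (cases K; cases n) auto

lemma terms_plug_sing: "terms (plug K (sing A)) \<noteq> []"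
  by (cases K) auto

lemma plug_sing_eq_single: "plug K (sing A) = Meta s [Frm f] \<Longrightarrow> K = Splice s [] [] \<and> f = A"
  by (cases K) (auto simp: Cons_eq_append_conv append_eq_Cons_conv)

lemma plug_sing_eq_Br:
  "plug K (sing A) = Meta s [Br Y] \<Longrightarrow> \<exists>k. K = Nest s [] k [] \<and> plug k (sing A) = Y"
  by (cases K) (auto simp: Cons_eq_append_conv append_eq_Cons_conv)

fun frame_stoup :: "mctx \<Rightarrow> frm multiset" where
  "frame_stoup (Splice z L R) = z"
| "frame_stoup (Nest z L c R) = z"

fun frame_left :: "mctx \<Rightarrow> tree list" where
  "frame_left (Splice z L R) = L"
| "frame_left (Nest z L c R) = L"

fun frame_right :: "mctx \<Rightarrow> tree list" where
  "frame_right (Splice z L R) = R"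
| "frame_right (Nest z L c R) = R"

fun piece :: "mctx \<Rightarrow> meta \<Rightarrow> meta" where
  "piece (Splice z L R) m = m"
| "piece (Nest z L c R) m = Meta {#} [Br (plug c m)]"

fun reframe :: "frm multiset \<Rightarrow> tree list \<Rightarrow> tree list \<Rightarrow> mctx \<Rightarrow> mctx" where
  "reframe z L R (Splice _ _ _) = Splice z L R"
| "reframe z L R (Nest _ _ c _) = Nest z L c R"

lemma plug_frame:
  "plug E m = Meta (frame_stoup E + stoup (piece E m))
    (frame_left E @ terms (piece E m) @ frame_right E)"
  by (cases E) auto

lemma plug_reframe [simp]:
  "plug (reframe z L R E) m = Meta (z + stoup (piece E m)) (L @ terms (piece E m) @ R)"
  by (cases E) auto

lemma piece_reframe [simp]: "piece (reframe z L R E) m = piece E m"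
  by (cases E) auto

lemma piece_sing: obtains t where "piece K (sing A) = Meta {#} [t]"
  by (cases K) auto

lemma plug_sing_eq_Cons:
  assumes "plug K (sing A) = Meta s (Frm f # G)"
  shows "K = Splice s [] G \<and> f = A
    \<or> (\<exists>K'. plug K' (sing A) = Meta s G
          \<and> (\<forall>n. plug K n = plug (Splice {#} [Frm f] []) (plug K' n)))"
proof (cases "frame_left K")
  case Nil
  with assms show ?thesis
    by (cases K) auto
next
  case (Cons t L)
  with assms show ?thesis
    by (intro disjI2 exI[of _ "reframe (frame_stoup K) L (frame_right K) K"])
      (simp add: plug_frame[of K])
qed

lemma plug_sing_eq_snoc:
  assumes "plug K (sing A) = Meta s (G @ [Frm f])"
  shows "K = Splice s G [] \<and> f = A
    \<or> (\<exists>K'. plug K' (sing A) = Meta s G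
          \<and> (\<forall>n. plug K n = plug (Splice {#} [] [Frm f]) (plug K' n)))"
proof (cases "frame_right K" rule: rev_cases)
  case Nil
  with assms show ?thesis
    by (cases K) auto
next
  case (snoc R t)
  with assms show ?thesis
    by (intro disjI2 exI[of _ "reframe (frame_stoup K) (frame_left K) R K"])
      (simp add: plug_frame[of K])
qed

lemma plug_sing_eq_append:
  assumes "plug K (sing A) = Meta (z1 + z2) (D @ G)"
  shows "(\<exists>K'. plug K' (sing A) = Meta z1 D \<and> (\<forall>n. plug K n = plug (Splice z2 [] G) (plug K' n)))
    \<or> (\<exists>K'. plug K' (sing A) = Meta z2 G \<and> (\<forall>n. plug K n = plug (Splice z1 D []) (plug K' n)))"
proof -
  obtain t where t: "piece K (sing A) = Meta {#} [t]"
    using piece_sing .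
  with assms have stoups: "frame_stoup K = z1 + z2"
    and seqs: "D @ G = frame_left K @ [t] @ frame_right K"
    by (simp_all add: plug_frame[of K])
  from seqs show ?thesis
  proof (cases rule: append_eq_append_single_cases)
    case (left Q)
    with stoups t show ?thesis
      by (intro disjI1 exI[of _ "reframe z1 (frame_left K) Q K"])
        (simp add: plug_frame[of K] ac_simps)
  next
    case (right M)
    with stoups t show ?thesis
      by (intro disjI2 exI[of _ "reframe z2 M (frame_right K) K"])
        (simp add: plug_frame[of K] ac_simps)
  qed
qed

text \<open>The hole of E, filled with m, and the occurrence of A at K are disjoint: the occurrence can
  be replaced by any Y, and the hole refilled by any m', independently of each other.\<close>

definition apart :: "mctx \<Rightarrow> meta \<Rightarrow> mctx \<Rightarrow> frm \<Rightarrow> bool" where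
  "apart E m K A \<longleftrightarrow> (\<forall>Y. \<exists>E'. plug E' m = plug K Y
     \<and> (\<forall>m'. \<exists>K'. plug E m' = plug K' (sing A) \<and> plug E' m' = plug K' Y))"

lemma apart_left:
  assumes "frame_left E = frame_left K @ terms (piece K (sing A)) @ M"
    and "frame_right K = M @ terms (piece E m) @ frame_right E"
    and "frame_stoup K = frame_stoup E + stoup (piece E m)"
  shows "apart E m K A"
  unfolding apart_def
proof (intro allI exI conjI)
  fix Y m'
  let ?E' = "reframe (frame_stoup E + stoup (piece K Y))
    (frame_left K @ terms (piece K Y) @ M) (frame_right E) E"
  let ?K' = "reframe (frame_stoup E + stoup (piece E m'))
    (frame_left K) (M @ terms (piece E m') @ frame_right E) K"
  show "plug ?E' m = plug K Y"
    by (subst plug_frame[of K]) (simp add: assms(2,3) ac_simps)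
  obtain t where "piece K (sing A) = Meta {#} [t]"
    using piece_sing .
  then show "plug E m' = plug ?K' (sing A)"
    by (subst plug_frame[of E]) (simp add: assms(1))
  show "plug ?E' m' = plug ?K' Y"
    by (simp add: ac_simps)
qed

lemma apart_right:
  assumes "frame_right E = M @ terms (piece K (sing A)) @ frame_right K"
    and "frame_left K = frame_left E @ terms (piece E m) @ M"
    and "frame_stoup K = frame_stoup E + stoup (piece E m)"
  shows "apart E m K A"
  unfolding apart_def
proof (intro allI exI conjI)
  fix Y m'
  let ?E' = "reframe (frame_stoup E + stoup (piece K Y))
    (frame_left E) (M @ terms (piece K Y) @ frame_right K) E"
  let ?K' = "reframe (frame_stoup E + stoup (piece E m'))
    (frame_left E @ terms (piece E m') @ M) (frame_right K) K"
  show "plug ?E' m = plug K Y"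
    by (subst plug_frame[of K]) (simp add: assms(2,3) ac_simps)
  obtain t where "piece K (sing A) = Meta {#} [t]"
    using piece_sing .
  then show "plug E m' = plug ?K' (sing A)"
    by (subst plug_frame[of E]) (simp add: assms(1))
  show "plug ?E' m' = plug ?K' Y"
    by (simp add: ac_simps)
qed

lemma apart_Nest:
  assumes "apart e m k A"
  shows "apart (Nest z L e R) m (Nest z L k R) A"
  unfolding apart_def
proof
  fix Y
  from assms obtain e' where e': "plug e' m = plug k Y"
    and parts: "\<forall>m'. \<exists>k'. plug e m' = plug k' (sing A) \<and> plug e' m' = plug k' Y"
    unfolding apart_def by blast
  have "\<exists>K'. plug (Nest z L e R) m' = plug K' (sing A) \<and> plug (Nest z L e' R) m' = plug K' Y" for m'
  proof -
    from parts obtain k' where "plug e m' = plug k' (sing A)" "plug e' m' = plug k' Y"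
      by blast
    then show ?thesis
      by (intro exI[of _ "Nest z L k' R"]) simp
  qed
  with e' show "\<exists>E'. plug E' m = plug (Nest z L k R) Y
     \<and> (\<forall>m'. \<exists>K'. plug (Nest z L e R) m' = plug K' (sing A) \<and> plug E' m' = plug K' Y)"
    by (intro exI[of _ "Nest z L e' R"]) simp
qed

lemma plug_eq_plug_sing_top:
  assumes "plug E m = plug K (sing A)"
  obtains "apart E m K A"
  | P Q t where "terms (piece E m) = P @ [t] @ Q" "piece K (sing A) = Meta {#} [t]"
    "frame_left K = frame_left E @ P" "frame_right K = Q @ frame_right E"
    "frame_stoup K = frame_stoup E + stoup (piece E m)"
proof -
  obtain t where t: "piece K (sing A) = Meta {#} [t]"
    using piece_sing .
  with assms have stoups: "frame_stoup K = frame_stoup E + stoup (piece E m)"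
    and seqs: "frame_left E @ terms (piece E m) @ frame_right E
      = frame_left K @ [t] @ frame_right K"
    by (simp_all add: plug_frame[of E] plug_frame[of K])
  from seqs show thesis
  proof (cases rule: append3_eq_append_single_cases)
    case (left M)
    with stoups t show thesis
      by (intro that(1) apart_left) simp_all
  next
    case (middle P Q)
    with stoups t show thesis
      by (intro that(2)) simp_all
  next
    case (right M)
    with stoups t show thesis
      by (intro that(1) apart_right) simp_all
  qed
qed

lemma plug_eq_plug_sing_cases:
  assumes "plug E m = plug K (sing A)"
  shows "(\<exists>K'. m = plug K' (sing A) \<and> (\<forall>n. plug E (plug K' n) = plug K n)) \<or> apart E m K A"
  using assms
proof (induction E arbitrary: K)
  case (Splice z L R)
  then show ?case
  proof (cases rule: plug_eq_plug_sing_top)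
    case (2 P Q t)
    then have "m = plug (reframe (stoup m) P Q K) (sing A)"
      and "plug (Splice z L R) (plug (reframe (stoup m) P Q K) n) = plug K n" for n
      by (cases m; simp add: plug_frame[of K] ac_simps)+
    then show ?thesis by blast
  qed simp
next
  case (Nest z L e R)
  from Nest.prems show ?case
  proof (cases rule: plug_eq_plug_sing_top)
    case (2 P Q t)
    then have "P = []" "Q = []" "t = Br (plug e m)"
      by (auto simp: Cons_eq_append_conv)
    with 2 obtain k where K: "K = Nest z L k R" and "plug e m = plug k (sing A)"
      by (cases K) auto
    from Nest.IH[OF this(2)] show ?thesis
    proof
      assume "\<exists>K'. m = plug K' (sing A) \<and> (\<forall>n. plug e (plug K' n) = plug k n)"
      then obtain K' where "m = plug K' (sing A)" "\<And>n. plug e (plug K' n) = plug k n"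
        by blast
      then show ?thesis by (intro disjI1 exI[of _ K']) (simp add: K)
    next
      assume "apart e m k A"
      then show ?thesis by (simp add: K apart_Nest)
    qed
  qed simp
qed

section \<open>The calculus with uniform left rules\<close>

text \<open>The left rules of the calculus, together with !P and !C, as local rewrites: the rule
  instance in context E has conclusion \<open>plug E m\<close>, main premises \<open>plug E m'\<close> for m' in ms,
  and the side premises listed in sides (the left premise of /L and \L).\<close>

inductive left_rule :: "bool \<Rightarrow> meta list \<Rightarrow> (meta \<times> frm) list \<Rightarrow> meta \<Rightarrow> bool" for neg where
  over: "left_rule neg [sing C] [(Meta z G, B)] (Meta z (Frm (Over C B) # G))"
| under: "left_rule neg [sing C] [(Meta z G, A)] (Meta z (G @ [Frm (Under A C)]))"
| prod: "left_rule neg [Meta {#} [Frm A, Frm B]] [] (sing (Prod A B))"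
| one: "\<not> neg \<Longrightarrow> left_rule neg [Meta {#} []] [] (sing One)"
| join: "left_rule neg [sing A1, sing A2] [] (sing (Join A1 A2))"
| meet1: "left_rule neg [sing A1] [] (sing (Meet A1 A2))"
| meet2: "left_rule neg [sing A2] [] (sing (Meet A1 A2))"
| box: "left_rule neg [sing A] [] (Meta {#} [Br (sing (Box A))])"
| diam: "left_rule neg [Meta {#} [Br (sing A)]] [] (sing (Diam A))"
| bang: "left_rule neg [Meta {#A#} []] [] (sing (Bang A))"
| bang_perm: "left_rule neg [sing A] [] (Meta {#A#} [])"
| bang_contr: "(neg \<longrightarrow> G \<noteq> [] \<or> z \<noteq> {#}) \<Longrightarrow>
    left_rule neg [Meta {#A#} [Br (Meta (add_mset A z) G)]] []
      (Meta {#A#} [Br (Meta {#} [Br (Meta z G)])])"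

inductive der_plug :: "bool \<Rightarrow> meta \<Rightarrow> frm \<Rightarrow> bool" for neg where
  axiom: "ok neg (sing A) A \<Longrightarrow> der_plug neg (sing A) A"
| one_right: "\<not> neg \<Longrightarrow> der_plug neg (Meta {#} []) One"
| left: "left_rule neg ms sides m \<Longrightarrow> \<forall>m'\<in>set ms. der_plug neg (plug E m') D
    \<Longrightarrow> \<forall>(Y, B)\<in>set sides. der_plug neg Y B \<Longrightarrow> ok neg (plug E m) D
    \<Longrightarrow> der_plug neg (plug E m) D"
| over_right: "der_plug neg (Meta z (G @ [Frm B])) C \<Longrightarrow> (neg \<longrightarrow> G \<noteq> [] \<or> z \<noteq> {#})
    \<Longrightarrow> ok neg (Meta z G) (Over C B) \<Longrightarrow> der_plug neg (Meta z G) (Over C B)"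
| under_right: "der_plug neg (Meta z (Frm A # G)) C \<Longrightarrow> (neg \<longrightarrow> G \<noteq> [] \<or> z \<noteq> {#})
    \<Longrightarrow> ok neg (Meta z G) (Under A C) \<Longrightarrow> der_plug neg (Meta z G) (Under A C)"
| prod_right: "der_plug neg (Meta z1 D) A \<Longrightarrow> der_plug neg (Meta z2 G) B
    \<Longrightarrow> ok neg (Meta (z1 + z2) (D @ G)) (Prod A B)
    \<Longrightarrow> der_plug neg (Meta (z1 + z2) (D @ G)) (Prod A B)"
| join_right1: "der_plug neg Y A1 \<Longrightarrow> ok neg Y (Join A1 A2) \<Longrightarrow> der_plug neg Y (Join A1 A2)"
| join_right2: "der_plug neg Y A2 \<Longrightarrow> ok neg Y (Join A1 A2) \<Longrightarrow> der_plug neg Y (Join A1 A2)"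
| meet_right: "der_plug neg Y A1 \<Longrightarrow> der_plug neg Y A2 \<Longrightarrow> ok neg Y (Meet A1 A2)
    \<Longrightarrow> der_plug neg Y (Meet A1 A2)"
| box_right: "der_plug neg (Meta {#} [Br Y]) A \<Longrightarrow> ok neg Y (Box A) \<Longrightarrow> der_plug neg Y (Box A)"
| diam_right: "der_plug neg Y A \<Longrightarrow> ok neg (Meta {#} [Br Y]) (Diam A)
    \<Longrightarrow> der_plug neg (Meta {#} [Br Y]) (Diam A)"
| bang_right: "der_plug neg (Meta {#A#} []) B \<Longrightarrow> ok neg (Meta {#A#} []) (Bang B)
    \<Longrightarrow> der_plug neg (Meta {#A#} []) (Bang B)"

lemma der_plug_left_fill:
  assumes "left_rule neg ms sides m"
    and "\<forall>m'\<in>set ms. der_plug neg (fill X (Meta (z + stoup m') (L @ terms m' @ R))) D"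
    and "\<forall>(Y, B)\<in>set sides. der_plug neg Y B"
    and "ok neg (fill X (Meta (z + stoup m) (L @ terms m @ R))) D"
  shows "der_plug neg (fill X (Meta (z + stoup m) (L @ terms m @ R))) D"
  using der_plug.left[OF assms(1), of "mctx_of X z L R"] assms(2-4) by (simp add: plug_mctx_of)

lemma der_imp_der_plug: "der neg Y C \<Longrightarrow> der_plug neg Y C"
proof (induction rule: der.induct)
  case (overL z1 G B X z2 D1 C D2 D)
  then show ?case
    using der_plug_left_fill[OF left_rule.over, where X = X and z = z2 and L = D1 and R = D2]
    by (simp add: ac_simps)
next
  case (underL z1 G A X z2 D1 C D2 D)
  then show ?case
    using der_plug_left_fill[OF left_rule.under, where X = X and z = z2 and L = D1 and R = D2]
    by (simp add: ac_simps)
next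
  case (prodL X z D1 A B D2 D)
  then show ?case
    using der_plug_left_fill[OF left_rule.prod, where X = X and z = z and L = D1 and R = D2]
    by simp
next
  case (oneL X z D1 D2 A)
  then show ?case
    using der_plug_left_fill[OF left_rule.one, where X = X and z = z and L = D1 and R = D2]
    by (simp add: ok_def)
next
  case (joinL X z D1 A1 D2 C A2)
  then show ?case
    using der_plug_left_fill[OF left_rule.join, where X = X and z = z and L = D1 and R = D2]
    by simp
next
  case (meetL1 X z D1 A1 D2 C A2)
  then show ?case
    using der_plug_left_fill[OF left_rule.meet1, where X = X and z = z and L = D1 and R = D2]
    by simp
next
  case (meetL2 X z D1 A2 D2 C A1)
  then show ?case
    using der_plug_left_fill[OF left_rule.meet2, where X = X and z = z and L = D1 and R = D2]
    by simp
next
  case (boxL X z D1 A D2 B)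
  then show ?case
    using der_plug_left_fill[OF left_rule.box, where X = X and z = z and L = D1 and R = D2]
    by simp
next
  case (diamL X z D1 A D2 B)
  then show ?case
    using der_plug_left_fill[OF left_rule.diam, where X = X and z = z and L = D1 and R = D2]
    by simp
next
  case (bangL X A z G1 G2 B)
  then show ?case
    using der_plug_left_fill[OF left_rule.bang, where X = X and z = z and L = G1 and R = G2]
    by simp
next
  case (bangP X z G1 A G2 B)
  then show ?case
    using der_plug_left_fill[OF left_rule.bang_perm, where X = X and z = z and L = G1 and R = G2]
    by simp
next
  case (bangC X A z G1 z' G2 G3 B)
  then show ?case
    using der_plug_left_fill[OF left_rule.bang_contr, where X = X and z = z and L = G1 and R = G3]
    by simp
qed (auto intro: der_plug.intros)

lemma der_plug_imp_der: "der_plug neg Y C \<Longrightarrow> der neg Y C"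
proof (induction rule: der_plug.induct)
  case (left ms sides m E D)
  obtain X z L R where E: "\<And>m. plug E m = fill X (Meta (z + stoup m) (L @ terms m @ R))"
    using plug_eq_fill by blast
  from left.hyps(1) left show ?case
  proof (cases rule: left_rule.cases)
    case (over C z1 G B)
    then show ?thesis using left der.overL[of neg z1 G B X z L C R D] by (auto simp: E ac_simps)
  next
    case (under C z1 G A)
    then show ?thesis using left der.underL[of neg z1 G A X z L C R D] by (auto simp: E ac_simps)
  qed (use left in \<open>auto simp: E intro: der.intros[simplified]\<close>)
qed (auto intro: der.intros)

lemma der_plug_iff_der: "der_plug neg Y C \<longleftrightarrow> der neg Y C"
  using der_imp_der_plug der_plug_imp_der by blast

lemma der_plug_ok: "der_plug neg Y C \<Longrightarrow> ok neg Y C"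
  by (induction rule: der_plug.induct) (auto simp: ok_def)

lemma one_free_meta_plug:
  "one_free_meta (plug K n) \<longleftrightarrow> one_free_meta (plug K (Meta {#} [])) \<and> one_free_meta n"
  by (induction K) (cases n; auto)+

lemma ok_plug: "ok neg (plug K n) C \<Longrightarrow> ok neg n' A \<Longrightarrow> ok neg (plug K n') C"
  unfolding ok_def by (metis one_free_meta_plug)

lemma ok_plug_der_plug: "ok neg (plug K (sing A)) C \<Longrightarrow> der_plug neg Y A \<Longrightarrow> ok neg (plug K Y) C"
  using ok_plug der_plug_ok by blast

text \<open>In the restricted calculus neither the antecedent of a derivable sequent nor any bracket in
  it is empty, so cutting such an antecedent into a premise of /R, \R or !C preserves the side
  condition of the rule.\<close>

fun nonempty_tree :: "tree \<Rightarrow> bool" and nonempty_meta :: "meta \<Rightarrow> bool" where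
  "nonempty_tree (Frm a) = True"
| "nonempty_tree (Br m) = nonempty_meta m"
| "nonempty_meta (Meta z ts) = ((z \<noteq> {#} \<or> ts \<noteq> []) \<and> (\<forall>t\<in>set ts. nonempty_tree t))"

lemma nonempty_meta_plug_terms: "nonempty_meta (plug E m) \<Longrightarrow> \<forall>t\<in>set (terms m). nonempty_tree t"
  by (induction E) auto

lemma nonempty_meta_plug_replace:
  "nonempty_meta (plug E m) \<Longrightarrow> m' \<noteq> Meta {#} [] \<Longrightarrow> \<forall>t\<in>set (terms m'). nonempty_tree t
    \<Longrightarrow> nonempty_meta (plug E m')"
  by (induction E) (cases m', auto)+

lemma left_rule_nonempty_meta:
  assumes rule: "left_rule neg ms sides m" and "neg" and premise: "nonempty_meta (plug E (hd ms))"
    and "\<forall>(Y, B)\<in>set sides. nonempty_meta Y"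
  shows "nonempty_meta (plug E m)"
proof (rule nonempty_meta_plug_replace[OF premise])
  have "\<forall>t\<in>set (terms (hd ms)). nonempty_tree t"
    using nonempty_meta_plug_terms[OF premise] .
  with rule show "\<forall>t\<in>set (terms m). nonempty_tree t"
    by cases (use assms(2,4) in auto)
  from rule show "m \<noteq> Meta {#} []"
    by cases auto
qed

lemma der_plug_nonempty_meta: "der_plug neg Y C \<Longrightarrow> neg \<Longrightarrow> nonempty_meta Y"
proof (induction rule: der_plug.induct)
  case (left ms sides m E D)
  from left.hyps(1) have "hd ms \<in> set ms"
    by cases auto
  with left show ?case
    by (intro left_rule_nonempty_meta[OF left.hyps(1)]) auto
qed auto

lemma der_plug_nonempty: "der_plug True Y C \<Longrightarrow> Y \<noteq> Meta {#} []"
  using der_plug_nonempty_meta by fastforce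

lemma der_plug_plug_nonempty:
  assumes "der_plug neg Y A"
  shows "neg \<longrightarrow> terms (plug K Y) \<noteq> [] \<or> stoup (plug K Y) \<noteq> {#}"
proof
  assume neg
  with assms have "plug K Y \<noteq> Meta {#} []"
    by (simp add: der_plug_nonempty plug_nonempty)
  then show "terms (plug K Y) \<noteq> [] \<or> stoup (plug K Y) \<noteq> {#}"
    by (cases "plug K Y") auto
qed

definition cut_admissible :: "bool \<Rightarrow> frm \<Rightarrow> bool" where
  "cut_admissible neg A \<longleftrightarrow>
    (\<forall>Y K C. der_plug neg Y A \<longrightarrow> der_plug neg (plug K (sing A)) C \<longrightarrow> der_plug neg (plug K Y) C)"

lemma cut_admissibleD:
  "cut_admissible neg A \<Longrightarrow> der_plug neg Y A \<Longrightarrow> der_plug neg (plug K (sing A)) C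
    \<Longrightarrow> der_plug neg (plug K Y) C"
  unfolding cut_admissible_def by blast

section \<open>Moving a cut into the derivation of the right premise\<close>

fun principal_cut :: "bool \<Rightarrow> frm \<Rightarrow> meta \<Rightarrow> bool" where
  "principal_cut neg (Over C B) Y \<longleftrightarrow> (\<forall>E z G D. der_plug neg (Meta z G) B
     \<longrightarrow> der_plug neg (plug E (sing C)) D \<longrightarrow> der_plug neg (plug E (plug (Splice z [] G) Y)) D)"
| "principal_cut neg (Under A C) Y \<longleftrightarrow> (\<forall>E z G D. der_plug neg (Meta z G) A
     \<longrightarrow> der_plug neg (plug E (sing C)) D \<longrightarrow> der_plug neg (plug E (plug (Splice z G []) Y)) D)"
| "principal_cut neg (Prod A B) Y \<longleftrightarrow> (\<forall>E D.
     der_plug neg (plug E (Meta {#} [Frm A, Frm B])) D \<longrightarrow> der_plug neg (plug E Y) D)"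
| "principal_cut neg One Y \<longleftrightarrow> (\<forall>E D.
     der_plug neg (plug E (Meta {#} [])) D \<longrightarrow> der_plug neg (plug E Y) D)"
| "principal_cut neg (Join A1 A2) Y \<longleftrightarrow> (\<forall>E D. der_plug neg (plug E (sing A1)) D
     \<longrightarrow> der_plug neg (plug E (sing A2)) D \<longrightarrow> der_plug neg (plug E Y) D)"
| "principal_cut neg (Meet A1 A2) Y \<longleftrightarrow> (\<forall>E D. der_plug neg (plug E (sing A1)) D
     \<or> der_plug neg (plug E (sing A2)) D \<longrightarrow> der_plug neg (plug E Y) D)"
| "principal_cut neg (Box A) Y \<longleftrightarrow> (\<forall>E D.
     der_plug neg (plug E (sing A)) D \<longrightarrow> der_plug neg (plug E (Meta {#} [Br Y])) D)"
| "principal_cut neg (Diam A) Y \<longleftrightarrow> (\<forall>E D.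
     der_plug neg (plug E (Meta {#} [Br (sing A)])) D \<longrightarrow> der_plug neg (plug E Y) D)"
| "principal_cut neg (Bang A) Y \<longleftrightarrow> (\<forall>E D.
     der_plug neg (plug E (Meta {#A#} [])) D \<longrightarrow> der_plug neg (plug E Y) D)"
| "principal_cut neg (Var n) Y \<longleftrightarrow> True"

definition cuts_into :: "bool \<Rightarrow> meta \<Rightarrow> frm \<Rightarrow> meta \<Rightarrow> frm \<Rightarrow> bool" where
  "cuts_into neg Y A R C \<longleftrightarrow> (\<forall>K. R = plug K (sing A) \<longrightarrow> der_plug neg (plug K Y) C)"

lemma left_rule_cut_inside:
  assumes rule: "left_rule neg ms sides (plug K (sing A))"
    and prems: "\<forall>m\<in>set ms. der_plug neg (plug E m) D \<and> cuts_into neg Y A (plug E m) D"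
    and sides: "\<forall>(Z, B)\<in>set sides. der_plug neg Z B \<and> cuts_into neg Y A Z B"
    and ok: "ok neg (plug E (plug K Y)) D"
    and Y: "der_plug neg Y A" "principal_cut neg A Y"
  shows "der_plug neg (plug E (plug K Y)) D"
  using rule
proof cases
  case (over C z G B)
  from plug_sing_eq_Cons[OF over(3)] show ?thesis
  proof (elim disjE exE conjE)
    fix K' assume K': "plug K' (sing A) = Meta z G"
      "\<forall>n. plug K n = plug (Splice {#} [Frm (Over C B)] []) (plug K' n)"
    with sides over have "der_plug neg (Meta (stoup (plug K' Y)) (terms (plug K' Y))) B"
      by (simp add: cuts_into_def)
    with prems over ok K'(2) show ?thesis
      using der_plug.left[OF left_rule.over, where E=E and D=D] by simp
  qed (use Y prems sides over in auto)
next
  case (under C z G A1)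
  from plug_sing_eq_snoc[OF under(3)] show ?thesis
  proof (elim disjE exE conjE)
    fix K' assume K': "plug K' (sing A) = Meta z G"
      "\<forall>n. plug K n = plug (Splice {#} [] [Frm (Under A1 C)]) (plug K' n)"
    with sides under have "der_plug neg (Meta (stoup (plug K' Y)) (terms (plug K' Y))) A1"
      by (simp add: cuts_into_def)
    with prems under ok K'(2) show ?thesis
      using der_plug.left[OF left_rule.under, where E=E and D=D] by simp
  qed (use Y prems sides under in auto)
next
  case (box A1)
  then obtain k where "K = Nest {#} [] k []" "plug k (sing A) = sing (Box A1)"
    using plug_sing_eq_Br by blast
  with Y prems box show ?thesis
    by (auto dest: plug_sing_eq_single)
next
  case (bang_perm A1)
  then show ?thesis
    using terms_plug_sing[of K A] by simp
next
  case (bang_contr G z A0)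
  obtain k where K: "K = Nest {#A0#} [] (Nest {#} [] k []) []" and k: "plug k (sing A) = Meta z G"
    using bang_contr(3) by (auto dest!: plug_sing_eq_Br)
  let ?k' = "mctx_comp E (Nest {#A0#} [] (mctx_comp (Splice {#A0#} [] []) k) [])"
  have "plug E (hd ms) = plug ?k' (sing A)"
    using bang_contr k by simp
  moreover have "cuts_into neg Y A (plug E (hd ms)) D"
    using prems bang_contr by simp
  ultimately have "der_plug neg (plug ?k' Y) D"
    unfolding cuts_into_def by blast
  moreover have "neg \<longrightarrow> terms (plug k Y) \<noteq> [] \<or> stoup (plug k Y) \<noteq> {#}"
    using der_plug_plug_nonempty[OF Y(1)] .
  ultimately show ?thesis
    using der_plug.left[OF left_rule.bang_contr[where G = "terms (plug k Y)"
          and z = "stoup (plug k Y)"]] ok K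
    by simp
qed (use Y prems rule in \<open>auto dest: plug_sing_eq_single\<close>)

lemma cuts_into_left_rule:
  assumes rule: "left_rule neg ms sides m"
    and prems: "\<forall>m'\<in>set ms. der_plug neg (plug E m') D \<and> cuts_into neg Y A (plug E m') D"
    and sides: "\<forall>(Z, B)\<in>set sides. der_plug neg Z B \<and> cuts_into neg Y A Z B"
    and ok: "ok neg (plug E m) D"
    and Y: "der_plug neg Y A" "principal_cut neg A Y"
  shows "cuts_into neg Y A (plug E m) D"
  unfolding cuts_into_def
proof (intro allI impI)
  fix K
  assume K: "plug E m = plug K (sing A)"
  have ok': "ok neg (plug K Y) D"
    using ok_plug_der_plug[OF ok[unfolded K] Y(1)] .
  from plug_eq_plug_sing_cases[OF K] show "der_plug neg (plug K Y) D"
  proof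
    assume "\<exists>K'. m = plug K' (sing A) \<and> (\<forall>n. plug E (plug K' n) = plug K n)"
    then obtain K' where m: "m = plug K' (sing A)" and EK: "\<And>n. plug E (plug K' n) = plug K n"
      by blast
    show ?thesis
      using left_rule_cut_inside[OF rule[unfolded m] prems sides _ Y] ok' unfolding EK .
  next
    assume "apart E m K A"
    then obtain E' where E': "plug E' m = plug K Y"
      and parts: "\<forall>m'. \<exists>K'. plug E m' = plug K' (sing A) \<and> plug E' m' = plug K' Y"
      unfolding apart_def by blast
    have "\<forall>m'\<in>set ms. der_plug neg (plug E' m') D"
    proof
      fix m'
      assume "m' \<in> set ms"
      with prems have "cuts_into neg Y A (plug E m') D"
        by blast
      moreover obtain K' where "plug E m' = plug K' (sing A)" "plug E' m' = plug K' Y"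
        using parts by blast
      ultimately show "der_plug neg (plug E' m') D"
        unfolding cuts_into_def by simp
    qed
    moreover have "\<forall>(Z, B)\<in>set sides. der_plug neg Z B"
      using sides by blast
    ultimately show ?thesis
      using der_plug.left[OF rule _ _ ok'[folded E']] unfolding E' by blast
  qed
qed

lemma cuts_into_over_right:
  assumes Y: "der_plug neg Y A" and IH: "cuts_into neg Y A (Meta z (G @ [Frm B])) C"
    and ok: "ok neg (Meta z G) (Over C B)"
  shows "cuts_into neg Y A (Meta z G) (Over C B)"
  unfolding cuts_into_def
proof (intro allI impI)
  fix K
  assume K: "Meta z G = plug K (sing A)"
  then have "Meta z (G @ [Frm B]) = plug (mctx_comp (Splice {#} [] [Frm B]) K) (sing A)"
    by (simp add: K[symmetric])
  with IH have "der_plug neg (plug (mctx_comp (Splice {#} [] [Frm B]) K) Y) C"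
    unfolding cuts_into_def by blast
  then have "der_plug neg (Meta (stoup (plug K Y)) (terms (plug K Y) @ [Frm B])) C"
    by simp
  moreover note der_plug_plug_nonempty[OF Y, of K]
  moreover note ok_plug_der_plug[OF ok[unfolded K] Y]
  ultimately show "der_plug neg (plug K Y) (Over C B)"
    using der_plug.over_right[of neg "stoup (plug K Y)" "terms (plug K Y)" B C] by simp
qed

lemma cuts_into_under_right:
  assumes Y: "der_plug neg Y A" and IH: "cuts_into neg Y A (Meta z (Frm B # G)) C"
    and ok: "ok neg (Meta z G) (Under B C)"
  shows "cuts_into neg Y A (Meta z G) (Under B C)"
  unfolding cuts_into_def
proof (intro allI impI)
  fix K
  assume K: "Meta z G = plug K (sing A)"
  then have "Meta z (Frm B # G) = plug (mctx_comp (Splice {#} [Frm B] []) K) (sing A)"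
    by (simp add: K[symmetric])
  with IH have "der_plug neg (plug (mctx_comp (Splice {#} [Frm B] []) K) Y) C"
    unfolding cuts_into_def by blast
  then have "der_plug neg (Meta (stoup (plug K Y)) (Frm B # terms (plug K Y))) C"
    by simp
  moreover note der_plug_plug_nonempty[OF Y, of K]
  moreover note ok_plug_der_plug[OF ok[unfolded K] Y]
  ultimately show "der_plug neg (plug K Y) (Under B C)"
    using der_plug.under_right[of neg "stoup (plug K Y)" B "terms (plug K Y)" C] by simp
qed

lemma cuts_into_prod_right:
  assumes Y: "der_plug neg Y A"
    and left: "der_plug neg (Meta z1 D1) A1" "cuts_into neg Y A (Meta z1 D1) A1"
    and right: "der_plug neg (Meta z2 D2) B1" "cuts_into neg Y A (Meta z2 D2) B1"
    and ok: "ok neg (Meta (z1 + z2) (D1 @ D2)) (Prod A1 B1)"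
  shows "cuts_into neg Y A (Meta (z1 + z2) (D1 @ D2)) (Prod A1 B1)"
  unfolding cuts_into_def
proof (intro allI impI)
  fix K
  assume K: "Meta (z1 + z2) (D1 @ D2) = plug K (sing A)"
  have ok': "ok neg (plug K Y) (Prod A1 B1)"
    using ok_plug_der_plug[OF ok[unfolded K] Y] .
  from plug_sing_eq_append[OF K[symmetric]] show "der_plug neg (plug K Y) (Prod A1 B1)"
  proof (elim disjE exE conjE)
    fix K'
    assume "plug K' (sing A) = Meta z1 D1" "\<forall>n. plug K n = plug (Splice z2 [] D2) (plug K' n)"
    with left(2) ok' show ?thesis
      using der_plug.prod_right[OF _ right(1), of "stoup (plug K' Y)"]
      by (simp add: cuts_into_def ac_simps)
  next
    fix K'
    assume "plug K' (sing A) = Meta z2 D2" "\<forall>n. plug K n = plug (Splice z1 D1 []) (plug K' n)"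
    with right(2) ok' show ?thesis
      using der_plug.prod_right[OF left(1), of "stoup (plug K' Y)" "terms (plug K' Y)"]
      by (simp add: cuts_into_def)
  qed
qed

lemma cuts_into_box_right:
  assumes Y: "der_plug neg Y A" and IH: "cuts_into neg Y A (Meta {#} [Br Z]) B"
    and ok: "ok neg Z (Box B)"
  shows "cuts_into neg Y A Z (Box B)"
  unfolding cuts_into_def
proof (intro allI impI)
  fix K
  assume K: "Z = plug K (sing A)"
  then have "Meta {#} [Br Z] = plug (Nest {#} [] K []) (sing A)"
    by simp
  with IH have "der_plug neg (plug (Nest {#} [] K []) Y) B"
    unfolding cuts_into_def by blast
  then show "der_plug neg (plug K Y) (Box B)"
    using der_plug.box_right ok_plug_der_plug[OF ok[unfolded K] Y] by simp
qed

lemma cuts_into_diam_right: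
  assumes Y: "der_plug neg Y A" and IH: "cuts_into neg Y A Z B"
    and ok: "ok neg (Meta {#} [Br Z]) (Diam B)"
  shows "cuts_into neg Y A (Meta {#} [Br Z]) (Diam B)"
  unfolding cuts_into_def
proof (intro allI impI)
  fix K
  assume K: "Meta {#} [Br Z] = plug K (sing A)"
  then obtain k where K_eq: "K = Nest {#} [] k []" and Z: "Z = plug k (sing A)"
    using plug_sing_eq_Br by metis
  with IH have "der_plug neg (plug k Y) B"
    unfolding cuts_into_def by blast
  moreover have "ok neg (plug K Y) (Diam B)"
    using ok_plug_der_plug[OF ok[unfolded K] Y] .
  ultimately show "der_plug neg (plug K Y) (Diam B)"
    using der_plug.diam_right K_eq by simp
qed

lemma cuts_into_of_principal_cut:
  assumes Y: "der_plug neg Y A" and principal: "principal_cut neg A Y"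
  shows "der_plug neg R C \<Longrightarrow> cuts_into neg Y A R C"
proof (induction rule: der_plug.induct)
  case (axiom B)
  show ?case
    using Y by (auto simp: cuts_into_def dest: sym[THEN plug_sing_eq_single])
next
  case one_right
  show ?case
    unfolding cuts_into_def by (metis terms.simps terms_plug_sing)
next
  case (left ms sides m E D)
  then show ?case
    by (intro cuts_into_left_rule[OF _ _ _ _ Y principal]) auto
next
  case (join_right1 Z A1 A2)
  then show ?case
    unfolding cuts_into_def using der_plug.join_right1 ok_plug_der_plug[OF _ Y] by metis
next
  case (join_right2 Z A2 A1)
  then show ?case
    unfolding cuts_into_def using der_plug.join_right2 ok_plug_der_plug[OF _ Y] by metis
next
  case (meet_right Z A1 A2)
  then show ?case
    unfolding cuts_into_def using der_plug.meet_right ok_plug_der_plug[OF _ Y] by metis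
next
  case (bang_right A0 B1)
  show ?case
    unfolding cuts_into_def by (metis terms.simps terms_plug_sing)
qed (use Y in \<open>auto intro: cuts_into_over_right cuts_into_under_right cuts_into_prod_right
  cuts_into_box_right cuts_into_diam_right\<close>)

lemma cut_of_principal_cut:
  "der_plug neg Y A \<Longrightarrow> principal_cut neg A Y \<Longrightarrow> der_plug neg (plug K (sing A)) C
    \<Longrightarrow> der_plug neg (plug K Y) C"
  using cuts_into_of_principal_cut unfolding cuts_into_def by blast

section \<open>Replacing formulae in stoups\<close>

abbreviation stoup_repl :: "frm \<Rightarrow> frm \<Rightarrow> frm multiset \<Rightarrow> frm multiset \<Rightarrow> bool" where
  "stoup_repl B A \<equiv> rel_mset (\<lambda>x y. y = x \<or> x = B \<and> y = A)"

inductive meta_repl :: "frm \<Rightarrow> frm \<Rightarrow> meta \<Rightarrow> meta \<Rightarrow> bool"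
  and tree_repl :: "frm \<Rightarrow> frm \<Rightarrow> tree \<Rightarrow> tree \<Rightarrow> bool" for B A where
  Meta: "stoup_repl B A z z' \<Longrightarrow> list_all2 (tree_repl B A) ts ts'
    \<Longrightarrow> meta_repl B A (Meta z ts) (Meta z' ts')"
| Frm: "tree_repl B A (Frm a) (Frm a)"
| Br: "meta_repl B A m m' \<Longrightarrow> tree_repl B A (Br m) (Br m')"
monos list_all2_mono

lemma meta_repl_Meta_iff [simp]: "meta_repl B A (Meta z ts) m'
    \<longleftrightarrow> (\<exists>z' ts'. m' = Meta z' ts' \<and> stoup_repl B A z z' \<and> list_all2 (tree_repl B A) ts ts')"
  by (auto elim: meta_repl.cases intro: meta_repl_tree_repl.intros)

lemma tree_repl_Frm_iff [simp]: "tree_repl B A (Frm a) t \<longleftrightarrow> t = Frm a"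
  by (auto elim: tree_repl.cases intro: meta_repl_tree_repl.intros)

lemma tree_repl_Br_iff [simp]: "tree_repl B A (Br m) t \<longleftrightarrow> (\<exists>m'. t = Br m' \<and> meta_repl B A m m')"
  by (auto elim: tree_repl.cases intro: meta_repl_tree_repl.intros)

lemma tree_repl_refl: "tree_repl B A t t" and meta_repl_refl: "meta_repl B A m m"
  by (induction t and m) (auto intro: multiset.rel_refl list.rel_refl_strong)

lemma meta_repl_stoup_terms:
  "meta_repl B A m m'
    \<Longrightarrow> stoup_repl B A (stoup m) (stoup m') \<and> list_all2 (tree_repl B A) (terms m) (terms m')"
  by (cases m) auto

lemma meta_repl_empty_iff: "meta_repl B A m m' \<Longrightarrow> m' = Meta {#} [] \<longleftrightarrow> m = Meta {#} []"
  by (cases m) (auto dest: list_all2_lengthD)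

lemma one_free_repl:
  "meta_repl B A m m' \<Longrightarrow> one_free A \<Longrightarrow> one_free_meta m \<Longrightarrow> one_free_meta m'"
  "tree_repl B A t t' \<Longrightarrow> one_free A \<Longrightarrow> one_free_tree t \<Longrightarrow> one_free_tree t'"
proof (induction rule: meta_repl_tree_repl.inducts)
  case (Meta z z' ts ts')
  then have "\<forall>t'\<in>set ts'. one_free_tree t'"
    by (intro list_all2_pred[OF Meta.IH(2)]) auto
  moreover have "\<forall>x\<in>#z'. one_free x"
    by (rule rel_mset_pred[OF Meta(1)]) (use Meta in auto)
  ultimately show ?case
    by simp
qed auto

lemma ok_repl: "ok neg R C \<Longrightarrow> meta_repl B A R R' \<Longrightarrow> neg \<longrightarrow> one_free A \<Longrightarrow> ok neg R' C"
  unfolding ok_def using one_free_repl(1) by blast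

definition mctx_repl :: "frm \<Rightarrow> frm \<Rightarrow> mctx \<Rightarrow> mctx \<Rightarrow> bool" where
  "mctx_repl B A E E' \<longleftrightarrow> (\<forall>n n'. meta_repl B A n n' \<longrightarrow> meta_repl B A (plug E n) (plug E' n'))"

lemma mctx_repl_refl: "mctx_repl B A E E"
  unfolding mctx_repl_def
  by (induction E) (auto intro!: rel_mset_union multiset.rel_refl list_all2_appendI
      list.rel_refl_strong tree_repl_refl dest: meta_repl_stoup_terms)

lemma meta_repl_plugE:
  assumes "meta_repl B A (plug E m) R'"
  obtains E' m' where "R' = plug E' m'" "mctx_repl B A E E'" "meta_repl B A m m'"
  using assms
proof (induction E arbitrary: R' thesis)
  case (Splice z L R)
  then obtain u L' T' R2 where R': "R' = Meta u (L' @ T' @ R2)" "stoup_repl B A (z + stoup m) u"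
    and lists: "list_all2 (tree_repl B A) L L'" "list_all2 (tree_repl B A) (terms m) T'"
      "list_all2 (tree_repl B A) R R2"
    by (auto simp: list_all2_append1)
  then obtain u1 u2 where u: "u = u1 + u2" "stoup_repl B A z u1" "stoup_repl B A (stoup m) u2"
    by (auto elim: rel_mset_union_leftE)
  moreover have "meta_repl B A m (Meta u2 T')"
    using lists(2) u by (cases m) auto
  ultimately show ?case
    using R' lists
    by (intro Splice.prems(1)[of "Splice u1 L' R2" "Meta u2 T'"])
      (auto simp: mctx_repl_def intro!: rel_mset_union list_all2_appendI
        dest: meta_repl_stoup_terms)
next
  case (Nest z L e R)
  then obtain u L' n R2 where R': "R' = Meta u (L' @ [Br n] @ R2)" "stoup_repl B A z u"
    and lists: "list_all2 (tree_repl B A) L L'" "list_all2 (tree_repl B A) R R2"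
    and "meta_repl B A (plug e m) n"
    by (auto simp: list_all2_append1 list_all2_Cons1)
  then obtain e' m' where "n = plug e' m'" "mctx_repl B A e e'" "meta_repl B A m m'"
    using Nest.IH by metis
  with R' lists show ?case
    by (intro Nest.prems(1)[of "Nest u L' e' R2" m'])
      (auto simp: mctx_repl_def intro!: list_all2_appendI)
qed

lemma left_rule_stoup_repl:
  assumes rule: "left_rule neg ms sides m"
    and prems: "\<forall>m1\<in>set ms. \<forall>R'. meta_repl B A (plug E m1) R' \<longrightarrow> der_plug neg R' D"
    and sides: "\<forall>(Z, C)\<in>set sides. \<forall>Z'. meta_repl B A Z Z' \<longrightarrow> der_plug neg Z' C"
    and repl: "mctx_repl B A E E'" "meta_repl B A m m'"
    and ok: "ok neg (plug E' m') D"
    and cut: "cut_admissible neg B" and A: "der_plug neg (Meta {#A#} []) B"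
  shows "der_plug neg (plug E' m') D"
proof -
  have prems': "\<forall>m1\<in>set ms. der_plug neg (plug E' m1) D"
    using prems repl(1) meta_repl_refl unfolding mctx_repl_def by blast
  have unchanged: "m' = m \<Longrightarrow> der_plug neg (plug E' m') D"
    using der_plug.left[OF rule prems'] sides meta_repl_refl ok by fast
  from rule show ?thesis
  proof cases
    case (over C z G B1)
    with repl(2) obtain z' G' where m': "m' = Meta z' (Frm (Over C B1) # G')"
      and "meta_repl B A (Meta z G) (Meta z' G')"
      by (auto simp: list_all2_Cons1)
    with sides over have "der_plug neg (Meta z' G') B1"
      by simp
    with prems' over ok show ?thesis
      unfolding m' by (intro der_plug.left[OF left_rule.over]) auto
  next
    case (under C z G A1)
    with repl(2) obtain z' G' where m': "m' = Meta z' (G' @ [Frm (Under A1 C)])"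
      and "meta_repl B A (Meta z G) (Meta z' G')"
      by (auto simp: list_all2_append1 list_all2_Cons1)
    with sides under have "der_plug neg (Meta z' G') A1"
      by simp
    with prems' under ok show ?thesis
      unfolding m' by (intro der_plug.left[OF left_rule.under]) auto
  next
    case (bang_perm A1)
    with repl(2) consider "m' = m" | "A1 = B" "m' = Meta {#A#} []"
      by (auto simp: rel_mset_single_iff)
    then show ?thesis
    proof cases
      case 1
      then show ?thesis by (rule unchanged)
    next
      case 2
      with prems' bang_perm have "der_plug neg (plug E' (sing B)) D"
        by simp
      from cut_admissibleD[OF cut A this] show ?thesis
        using 2 by simp
    qed
  next
    case (bang_contr G z A1)
    with repl(2) obtain a' z' G' where m': "m' = Meta {#a'#} [Br (Meta {#} [Br (Meta z' G')])]"
      and a': "a' = A1 \<or> A1 = B \<and> a' = A" and z': "stoup_repl B A z z'"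
      and G': "list_all2 (tree_repl B A) G G'"
      by (auto simp: rel_mset_single_iff list_all2_Cons1)
    have "meta_repl B A (hd ms) (Meta {#a'#} [Br (Meta (add_mset a' z') G')])"
      using bang_contr a' z' G' by (auto simp: rel_mset_single_iff intro: rel_mset_Plus)
    with prems repl(1) bang_contr
    have "der_plug neg (plug E' (Meta {#a'#} [Br (Meta (add_mset a' z') G')])) D"
      unfolding mctx_repl_def by simp
    moreover have "neg \<longrightarrow> G' \<noteq> [] \<or> z' \<noteq> {#}"
      using bang_contr(4) meta_repl_empty_iff[of B A "Meta z G" "Meta z' G'"] G' z' by auto
    ultimately show ?thesis
      using ok unfolding m' by (intro der_plug.left[OF left_rule.bang_contr]) auto
  qed (use unchanged repl(2) in \<open>auto simp: list_all2_Cons1\<close>)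
qed

lemma der_plug_stoup_repl:
  assumes cut: "cut_admissible neg B" and A: "der_plug neg (Meta {#A#} []) B"
  shows "der_plug neg R C \<Longrightarrow> meta_repl B A R R' \<Longrightarrow> der_plug neg R' C"
proof -
  have one_free: "neg \<longrightarrow> one_free A"
    using der_plug_ok[OF A] by (simp add: ok_def)
  show "der_plug neg R C \<Longrightarrow> meta_repl B A R R' \<Longrightarrow> der_plug neg R' C"
  proof (induction arbitrary: R' rule: der_plug.induct)
    case (left ms sides m E D)
    from meta_repl_plugE[OF left.prems] obtain E' m'
      where R': "R' = plug E' m'" and "mctx_repl B A E E'" "meta_repl B A m m'" .
    moreover note ok_repl[OF \<open>ok neg (plug E m) D\<close> left.prems one_free]
    ultimately show ?case
      using left.IH by (auto intro!: left_rule_stoup_repl[OF left.hyps(1) _ _ _ _ _ cut A])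
  next
    case (over_right z G B1 C0)
    then obtain z' G' where R': "R' = Meta z' G'" and repl: "meta_repl B A (Meta z G) (Meta z' G')"
      by auto
    then have "der_plug neg (Meta z' (G' @ [Frm B1])) C0"
      by (intro over_right.IH) (auto intro: list_all2_appendI)
    with over_right.hyps repl one_free show ?case
      unfolding R' by (intro der_plug.over_right ok_repl[OF over_right.hyps(3) repl])
        (auto dest: meta_repl_empty_iff)
  next
    case (under_right z A1 G C0)
    then obtain z' G' where R': "R' = Meta z' G'" and repl: "meta_repl B A (Meta z G) (Meta z' G')"
      by auto
    then have "der_plug neg (Meta z' (Frm A1 # G')) C0"
      by (intro under_right.IH) auto
    with under_right.hyps repl one_free show ?case
      unfolding R' by (intro der_plug.under_right ok_repl[OF under_right.hyps(3) repl])
        (auto dest: meta_repl_empty_iff)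
  next
    case (prod_right z1 D0 A1 z2 G B1)
    then obtain u1 u2 D' G' where R': "R' = Meta (u1 + u2) (D' @ G')"
      and "meta_repl B A (Meta z1 D0) (Meta u1 D')" "meta_repl B A (Meta z2 G) (Meta u2 G')"
      by (auto simp: list_all2_append1 elim: rel_mset_union_leftE)
    with prod_right ok_repl[OF prod_right.hyps(3) prod_right.prems one_free] show ?case
      by (auto intro!: der_plug.prod_right)
  next
    case (box_right Y A1)
    then have "der_plug neg (Meta {#} [Br R']) A1"
      by (intro box_right.IH) auto
    then show ?case
      by (rule der_plug.box_right[OF _ ok_repl[OF box_right.hyps(2) box_right.prems one_free]])
  next
    case (diam_right Y A1)
    then obtain Y' where "R' = Meta {#} [Br Y']" "meta_repl B A Y Y'"
      by (auto simp: list_all2_Cons1)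
    with diam_right ok_repl[OF diam_right.hyps(2) diam_right.prems one_free] show ?case
      by (auto intro!: der_plug.diam_right)
  next
    case (bang_right A1 B1)
    then obtain a' where "R' = Meta {#a'#} []"
      by (auto simp: rel_mset_single_iff)
    with bang_right ok_repl[OF bang_right.hyps(2) bang_right.prems one_free] show ?case
      by (auto intro!: der_plug.bang_right)
  next
    case (join_right1 Y A1 A2)
    then show ?case
      by (metis der_plug.join_right1 ok_repl one_free)
  next
    case (join_right2 Y A2 A1)
    then show ?case
      by (metis der_plug.join_right2 ok_repl one_free)
  next
    case (meet_right Y A1 A2)
    then show ?case
      by (metis der_plug.meet_right ok_repl one_free)
  qed (auto simp: list_all2_Cons1 intro: der_plug.axiom der_plug.one_right)
qed

section \<open>Principal cuts and cut admissibility\<close>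

lemma principal_cut_Over:
  assumes "cut_admissible neg C" "cut_admissible neg B" "der_plug neg (Meta z (G @ [Frm B])) C"
  shows "principal_cut neg (Over C B) (Meta z G)"
proof (simp only: principal_cut.simps, intro allI impI)
  fix E z1 G1 D
  assume "der_plug neg (Meta z1 G1) B" "der_plug neg (plug E (sing C)) D"
  with assms(1,3) have "der_plug neg (plug (mctx_comp E (Splice z G [])) (sing B)) D"
    using cut_admissibleD[of neg C _ E D] by simp
  with assms(2) \<open>der_plug neg (Meta z1 G1) B\<close>
  have "der_plug neg (plug (mctx_comp E (Splice z G [])) (Meta z1 G1)) D"
    by (rule cut_admissibleD)
  then show "der_plug neg (plug E (plug (Splice z1 [] G1) (Meta z G))) D"
    by (simp add: ac_simps)
qed

lemma principal_cut_Under: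
  assumes "cut_admissible neg C" "cut_admissible neg A" "der_plug neg (Meta z (Frm A # G)) C"
  shows "principal_cut neg (Under A C) (Meta z G)"
proof (simp only: principal_cut.simps, intro allI impI)
  fix E z1 G1 D
  assume "der_plug neg (Meta z1 G1) A" "der_plug neg (plug E (sing C)) D"
  with assms(1,3) have "der_plug neg (plug (mctx_comp E (Splice z [] G)) (sing A)) D"
    using cut_admissibleD[of neg C _ E D] by simp
  with assms(2) \<open>der_plug neg (Meta z1 G1) A\<close>
  have "der_plug neg (plug (mctx_comp E (Splice z [] G)) (Meta z1 G1)) D"
    by (rule cut_admissibleD)
  then show "der_plug neg (plug E (plug (Splice z1 G1 []) (Meta z G))) D"
    by (simp add: ac_simps)
qed

lemma principal_cut_Prod:
  assumes "cut_admissible neg A" "cut_admissible neg B"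
    and "der_plug neg (Meta z1 D1) A" "der_plug neg (Meta z2 D2) B"
  shows "principal_cut neg (Prod A B) (Meta (z1 + z2) (D1 @ D2))"
proof (simp only: principal_cut.simps, intro allI impI)
  fix E D
  assume "der_plug neg (plug E (Meta {#} [Frm A, Frm B])) D"
  then have "der_plug neg (plug (mctx_comp E (Splice {#} [] [Frm B])) (sing A)) D"
    by simp
  from cut_admissibleD[OF assms(1,3) this]
  have "der_plug neg (plug (mctx_comp E (Splice z1 D1 [])) (sing B)) D"
    by simp
  with assms(2,4) have "der_plug neg (plug (mctx_comp E (Splice z1 D1 [])) (Meta z2 D2)) D"
    by (rule cut_admissibleD)
  then show "der_plug neg (plug E (Meta (z1 + z2) (D1 @ D2))) D"
    by simp
qed

lemma principal_cut_Join1: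
  assumes "cut_admissible neg A1" "der_plug neg Y A1"
  shows "principal_cut neg (Join A1 A2) Y"
  using cut_admissibleD[OF assms] by (simp only: principal_cut.simps) blast

lemma principal_cut_Join2:
  assumes "cut_admissible neg A2" "der_plug neg Y A2"
  shows "principal_cut neg (Join A1 A2) Y"
  using cut_admissibleD[OF assms] by (simp only: principal_cut.simps) blast

lemma principal_cut_Meet:
  assumes "cut_admissible neg A1" "cut_admissible neg A2" "der_plug neg Y A1" "der_plug neg Y A2"
  shows "principal_cut neg (Meet A1 A2) Y"
  using cut_admissibleD[OF assms(1,3)] cut_admissibleD[OF assms(2,4)]
  by (simp only: principal_cut.simps) blast

lemma principal_cut_Box:
  assumes "cut_admissible neg A" "der_plug neg (Meta {#} [Br Y]) A"
  shows "principal_cut neg (Box A) Y"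
  using cut_admissibleD[OF assms] by (simp only: principal_cut.simps) blast

lemma principal_cut_Diam:
  assumes "cut_admissible neg A" "der_plug neg Y A"
  shows "principal_cut neg (Diam A) (Meta {#} [Br Y])"
proof (simp only: principal_cut.simps, intro allI impI)
  fix E D
  assume "der_plug neg (plug E (Meta {#} [Br (sing A)])) D"
  then have "der_plug neg (plug (mctx_comp E (Nest {#} [] (Splice {#} [] []) [])) (sing A)) D"
    by simp
  from cut_admissibleD[OF assms this] show "der_plug neg (plug E (Meta {#} [Br Y])) D"
    by simp
qed

lemma principal_cut_Bang:
  assumes "cut_admissible neg B" "der_plug neg (Meta {#A#} []) B"
  shows "principal_cut neg (Bang B) (Meta {#A#} [])"
proof (simp only: principal_cut.simps, intro allI impI)
  fix E D
  assume "der_plug neg (plug E (Meta {#B#} [])) D"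
  moreover have "meta_repl B A (plug E (Meta {#B#} [])) (plug E (Meta {#A#} []))"
    using mctx_repl_refl[of B A E] unfolding mctx_repl_def
    by (simp add: rel_mset_single_iff)
  ultimately show "der_plug neg (plug E (Meta {#A#} [])) D"
    by (rule der_plug_stoup_repl[OF assms])
qed

lemma cut_commutes_left_rule:
  assumes rule: "left_rule neg ms sides m"
    and prems: "\<forall>m'\<in>set ms. der_plug neg (plug (mctx_comp K E) m') C"
    and sides: "\<forall>(Z, B)\<in>set sides. der_plug neg Z B"
    and ok: "ok neg (plug E m) D" and cut: "der_plug neg (plug K (sing D)) C"
  shows "der_plug neg (plug K (plug E m)) C"
proof -
  have "ok neg (plug (mctx_comp K E) m) C"
    using ok_plug[OF der_plug_ok[OF cut] ok] by simp
  with rule prems sides have "der_plug neg (plug (mctx_comp K E) m) C"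
    by (intro der_plug.left)
  then show ?thesis
    by simp
qed

lemma cut_admissible_step:
  assumes "\<And>B. size B < size A \<Longrightarrow> cut_admissible neg B"
  shows "cut_admissible neg A"
proof -
  have "der_plug neg Y A \<Longrightarrow> \<forall>B. size B < size A \<longrightarrow> cut_admissible neg B
    \<Longrightarrow> der_plug neg (plug K (sing A)) C \<Longrightarrow> der_plug neg (plug K Y) C" for Y K C
  proof (induction arbitrary: K C rule: der_plug.induct)
    case (left ms sides m E D)
    then show ?case
      by (intro cut_commutes_left_rule[OF left.hyps(1) _ _ _ left.prems(2)]) auto
  next
    case one_right
    then show ?case
      by (intro cut_of_principal_cut[OF der_plug.one_right]) simp_all
  next
    case (over_right z G B C0)
    then show ?case
      by (intro cut_of_principal_cut[OF der_plug.over_right[OF over_right.hyps] _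
          over_right.prems(2)] principal_cut_Over) auto
  next
    case (under_right z A1 G C0)
    then show ?case
      by (intro cut_of_principal_cut[OF der_plug.under_right[OF under_right.hyps] _
          under_right.prems(2)] principal_cut_Under) auto
  next
    case (prod_right z1 D0 A1 z2 G B1)
    then show ?case
      by (intro cut_of_principal_cut[OF der_plug.prod_right[OF prod_right.hyps] _
          prod_right.prems(2)] principal_cut_Prod) auto
  next
    case (join_right1 Y A1 A2)
    then show ?case
      by (intro cut_of_principal_cut[OF der_plug.join_right1[OF join_right1.hyps] _
          join_right1.prems(2)] principal_cut_Join1) auto
  next
    case (join_right2 Y A2 A1)
    then show ?case
      by (intro cut_of_principal_cut[OF der_plug.join_right2[OF join_right2.hyps] _
          join_right2.prems(2)] principal_cut_Join2) auto
  next
    case (meet_right Y A1 A2)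
    then show ?case
      by (intro cut_of_principal_cut[OF der_plug.meet_right[OF meet_right.hyps] _
          meet_right.prems(2)] principal_cut_Meet) auto
  next
    case (box_right Y A1)
    then show ?case
      by (intro cut_of_principal_cut[OF der_plug.box_right[OF box_right.hyps] _
          box_right.prems(2)] principal_cut_Box) auto
  next
    case (diam_right Y A1)
    then show ?case
      by (intro cut_of_principal_cut[OF der_plug.diam_right[OF diam_right.hyps] _
          diam_right.prems(2)] principal_cut_Diam) auto
  next
    case (bang_right A0 B1)
    then show ?case
      by (intro cut_of_principal_cut[OF der_plug.bang_right[OF bang_right.hyps] _
          bang_right.prems(2)] principal_cut_Bang) auto
  qed simp
  with assms show ?thesis
    unfolding cut_admissible_def by blast
qed

lemma cut_admissible_all: "cut_admissible neg A"
  by (induction A rule: measure_induct_rule[of size]) (rule cut_admissible_step)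

theorem theorem1:
  fixes neg :: bool and xi zeta :: "frm multiset" and Pi G1 G2 :: "tree list"
    and A C :: frm and X :: ctx
  assumes "der neg (Meta xi Pi) A"
      and "der neg (fill X (Meta zeta (G1 @ [Frm A] @ G2))) C"
  shows "der neg (fill X (Meta (xi + zeta) (G1 @ Pi @ G2))) C"
proof -
  have "der_plug neg (Meta xi Pi) A"
    using assms(1) by (simp add: der_plug_iff_der)
  moreover have "der_plug neg (plug (mctx_of X zeta G1 G2) (sing A)) C"
    using assms(2) by (simp add: der_plug_iff_der plug_mctx_of)
  ultimately have "der_plug neg (plug (mctx_of X zeta G1 G2) (Meta xi Pi)) C"
    by (rule cut_admissibleD[OF cut_admissible_all])
  then show ?thesis
    by (simp add: der_plug_iff_der plug_mctx_of ac_simps)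
qed

end
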